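(* For every strictly positive formula $A$ and every $\alpha\le\omega$, $A\nvdash_{\mathbf{RC\omega}}\alpha A$.
   Context: Strictly positive formulas: $A::= p\mid \top\mid (A\land B)\mid \alpha A$, $\alpha\le\omega$. $\mathbf{RC\omega}$: $A\vdash A$; $A\vdash\top$; cut; $A\land B\vdash A$; $A\land B\vdash B$; from $A\vdash B$, $A\vdash C$ infer $A\vdash B\land C$; from $A\vdash B$ infer $\alpha A\vdash\alpha B$; $\alpha\alpha A\vdash\alpha A$; $\alpha\beta A\vdash\beta A$, $\beta\alpha A\vdash\beta A$ for $\alpha\ge\beta$; $\alpha A\land\beta B\vdash\alpha(A\land\beta B)$ for $\alpha>\beta$; $\alpha A\vdash\beta A$ for $\alpha>\beta$; $\omega A\vdash A$. *)

theory Defs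
  imports Main "HOL-Library.Extended_Nat"
begin

text \<open>Modality indices alpha \<le> omega are represented by extended naturals (enat), where
  \<infinity> plays the role of omega.\<close>

datatype fm = Var nat | Top | Conj fm fm | Dia enat fm

inductive RCw :: "fm \<Rightarrow> fm \<Rightarrow> bool" (infix "\<turnstile>\<^sub>R" 50) where
  refl: "A \<turnstile>\<^sub>R A"
| top: "A \<turnstile>\<^sub>R Top"
| cut: "A \<turnstile>\<^sub>R B \<Longrightarrow> B \<turnstile>\<^sub>R C \<Longrightarrow> A \<turnstile>\<^sub>R C"
| conjE1: "Conj A B \<turnstile>\<^sub>R A"
| conjE2: "Conj A B \<turnstile>\<^sub>R B"
| conjI: "A \<turnstile>\<^sub>R B \<Longrightarrow> A \<turnstile>\<^sub>R C \<Longrightarrow> A \<turnstile>\<^sub>R Conj B C"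
| nec: "A \<turnstile>\<^sub>R B \<Longrightarrow> Dia a A \<turnstile>\<^sub>R Dia a B"
| trans4: "Dia a (Dia a A) \<turnstile>\<^sub>R Dia a A"
| mono1: "a \<ge> b \<Longrightarrow> Dia a (Dia b A) \<turnstile>\<^sub>R Dia b A"
| mono2: "a \<ge> b \<Longrightarrow> Dia b (Dia a A) \<turnstile>\<^sub>R Dia b A"
| J: "a > b \<Longrightarrow> Conj (Dia a A) (Dia b B) \<turnstile>\<^sub>R Dia a (Conj A (Dia b B))"
| mono: "a > b \<Longrightarrow> Dia a A \<turnstile>\<^sub>R Dia b A"
| omega: "Dia \<infinity> A \<turnstile>\<^sub>R A"

end

theory Submission
  imports Defs
begin

(* Since <a>A derives <0>A, it suffices to refute A |- <0>A, which we do
   semantically.  For every depth N we build a model whose worlds are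
   sequences w : nat => ord of Cantor normal forms (ordinals below epsilon_0)
   with the "alignment" property that w k is a multiple of omega^(w (Suc k))
   for k < N.  Formulas denote upward-closed sets of worlds; <n>X (n <= N)
   holds at w if some v in X lies strictly below w in all coordinates <= n,
   and <omega>X is read as X /\ <N>X.  Since <0> is well-founded on worlds,
   a nonempty set X never satisfies X <= <0>X, which yields the theorem. *)

section \<open>Ordinal notations in Cantor normal form\<close>

text \<open>\<open>OPlus a b\<close> denotes \<open>\<omega>^a + b\<close>.\<close>

datatype ord = OZero | OPlus ord ord

fun olt :: "ord \<Rightarrow> ord \<Rightarrow> bool" where
  "olt OZero OZero = False"
| "olt OZero (OPlus _ _) = True"
| "olt (OPlus _ _) OZero = False"
| "olt (OPlus a b) (OPlus c d) = (olt a c \<or> (a = c \<and> olt b d))"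

definition ole :: "ord \<Rightarrow> ord \<Rightarrow> bool" where
  "ole x y = (olt x y \<or> x = y)"

fun nf :: "ord \<Rightarrow> bool" where
  "nf OZero = True"
| "nf (OPlus a b) = (nf a \<and> nf b \<and> (case b of OZero \<Rightarrow> True | OPlus c _ \<Rightarrow> ole c a))"

definition omax :: "ord \<Rightarrow> ord \<Rightarrow> ord" where
  "omax x y = (if olt x y then y else x)"

lemma olt_irrefl [simp]: "\<not> olt x x"
  by (induction x) auto

lemma olt_OZero [simp]: "\<not> olt x OZero"
  by (cases x) auto

lemma olt_trans: "olt x y \<Longrightarrow> olt y z \<Longrightarrow> olt x z"
proof (induction x arbitrary: y z)
  case OZero
  then show ?case by (cases z) auto
next
  case (OPlus a b)
  then show ?case by (cases y; cases z) auto
qed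

lemma olt_linear: "olt x y \<or> x = y \<or> olt y x"
proof (induction x arbitrary: y)
  case OZero
  then show ?case by (cases y) auto
next
  case (OPlus a b)
  then show ?case by (cases y) (use OPlus.IH in auto)
qed

lemma ole_trans: "ole x y \<Longrightarrow> ole y z \<Longrightarrow> ole x z"
  and olt_ole_trans: "olt x y \<Longrightarrow> ole y z \<Longrightarrow> olt x z"
  and ole_olt_trans: "ole x y \<Longrightarrow> olt y z \<Longrightarrow> olt x z"
  unfolding ole_def using olt_trans by blast+

lemma not_olt_ole: "\<not> olt x y \<Longrightarrow> ole y x"
  unfolding ole_def using olt_linear by blast

lemma omax_ge: "ole x (omax x y)" "ole y (omax x y)"
  unfolding omax_def ole_def using olt_linear by auto

lemma omax_less: "olt x z \<Longrightarrow> olt y z \<Longrightarrow> olt (omax x y) z"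
  by (simp add: omax_def)

lemma nf_omax: "nf x \<Longrightarrow> nf y \<Longrightarrow> nf (omax x y)"
  by (simp add: omax_def)

lemma olt_tail: "nf (OPlus c d) \<Longrightarrow> olt d (OPlus c d)"
  by (induction d arbitrary: c) (auto simp: ole_def)

text \<open>The order on normal forms is well-founded; we show accessibility of every
  normal form by a nested induction on the exponent and the tail.\<close>

definition nf_less :: "ord \<Rightarrow> ord \<Rightarrow> bool" where
  "nf_less y x = (nf y \<and> olt y x)"

lemma accp_OZero: "Wellfounded.accp nf_less OZero"
  by (rule accp.accI) (simp add: nf_less_def)

lemma accp_OPlus:
  assumes "Wellfounded.accp nf_less a"
  shows "Wellfounded.accp nf_less b \<Longrightarrow> nf (OPlus a b) \<Longrightarrow> Wellfounded.accp nf_less (OPlus a b)"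
  using assms
proof (induction a arbitrary: b rule: accp.induct)
  case (accI a)
  note IH_exp = accI.IH
  show ?case using accI.prems(1,2)
  proof (induction b rule: accp.induct)
    case (accI b)
    note IH_tail = accI.IH
    have acc_below: "Wellfounded.accp nf_less y" if "nf y" "olt y (OPlus a b)" for y
      using that
    proof (induction y)
      case OZero
      show ?case by (rule accp_OZero)
    next
      case (OPlus c d)
      have nf_cd: "nf c" "nf d" using OPlus.prems(1) by auto
      have "olt d (OPlus a b)"
        using olt_trans[OF olt_tail[OF OPlus.prems(1)] OPlus.prems(2)] .
      then have acc_d: "Wellfounded.accp nf_less d" by (rule OPlus.IH(2)[OF nf_cd(2)])
      show ?case
      proof (cases "olt c a")
        case True
        then have "nf_less c a" using nf_cd by (simp add: nf_less_def)
        from IH_exp[OF this acc_d OPlus.prems(1)] show ?thesis .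
      next
        case False
        then have "c = a" "olt d b" using OPlus.prems(2) by auto
        moreover have "nf_less d b" using \<open>olt d b\<close> nf_cd by (simp add: nf_less_def)
        ultimately show ?thesis using IH_tail[of d] OPlus.prems(1) by simp
      qed
    qed
    show ?case
      by (rule accp.accI, rule acc_below) (simp_all add: nf_less_def)
  qed
qed

lemma accp_nf: "nf x \<Longrightarrow> Wellfounded.accp nf_less x"
proof (induction x)
  case OZero
  show ?case by (rule accp_OZero)
next
  case (OPlus a b)
  then show ?case by (intro accp_OPlus) simp_all
qed

lemma nf_minimal:
  assumes "x \<in> S" "\<forall>y\<in>S. nf y"
  shows "\<exists>m\<in>S. \<forall>y\<in>S. \<not> olt y m"
proof -
  have "Wellfounded.accp nf_less x" using accp_nf assms by blast
  then show ?thesis using assms(1)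
  proof (induction x rule: accp.induct)
    case (accI x)
    show ?case
    proof (cases "\<exists>y\<in>S. olt y x")
      case True
      then obtain y where "y \<in> S" "olt y x" by blast
      moreover from this have "nf_less y x" using assms(2) by (simp add: nf_less_def)
      ultimately show ?thesis using accI.IH by blast
    next
      case False
      then show ?thesis using accI.prems by blast
    qed
  qed
qed

text \<open>\<open>next_mult x d\<close> is the least multiple of \<open>\<omega>^d\<close> above \<open>x\<close>: the terms of
  \<open>x\<close> with exponent below \<open>d\<close> are dropped and \<open>\<omega>^d\<close> is added.\<close>

fun next_mult :: "ord \<Rightarrow> ord \<Rightarrow> ord" where
  "next_mult OZero d = OPlus d OZero"
| "next_mult (OPlus a b) d = (if olt a d then OPlus d OZero else OPlus a (next_mult b d))"

fun mult_of :: "ord \<Rightarrow> ord \<Rightarrow> bool" where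
  "mult_of d OZero = True"
| "mult_of d (OPlus a b) = (if b = OZero then ole d a else mult_of d b)"

lemma next_mult_gt: "olt x (next_mult x d)"
  by (induction x) auto

lemma next_mult_nonzero: "next_mult x d \<noteq> OZero"
  by (cases x) auto

lemma mult_of_next_mult: "mult_of d (next_mult x d)"
  by (induction x) (auto simp: ole_def next_mult_nonzero)

lemma next_mult_lead: "next_mult b d = OPlus c e \<Longrightarrow> c = d \<or> (\<exists>f. b = OPlus c f)"
  by (cases b) (auto split: if_splits)

lemma nf_next_mult: "nf x \<Longrightarrow> nf d \<Longrightarrow> nf (next_mult x d)"
proof (induction x)
  case OZero
  then show ?case by simp
next
  case (OPlus a b)
  show ?case
  proof (cases "olt a d")
    case True
    with OPlus show ?thesis by simp
  next
    case False
    have "case next_mult b d of OZero \<Rightarrow> True | OPlus c e \<Rightarrow> ole c a"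
    proof (cases "next_mult b d")
      case (OPlus c e)
      from next_mult_lead[OF this] show ?thesis
        using OPlus OPlus.prems False not_olt_ole by auto
    qed simp
    with False OPlus show ?thesis by simp
  qed
qed

lemma mult_of_lead: "nf (OPlus e f) \<Longrightarrow> mult_of d (OPlus e f) \<Longrightarrow> ole d e"
proof (induction f arbitrary: e)
  case (OPlus g h)
  then have "ole d g" "ole g e" by auto
  then show ?case using ole_trans by blast
qed simp

text \<open>The gap lemma: below a multiple \<open>a\<close> of \<open>\<omega>^d'\<close> with \<open>d < d'\<close>, the next multiple
  of \<open>\<omega>^d\<close> above any \<open>x < a\<close> still lies below \<open>a\<close>.\<close>

lemma next_mult_below:
  "nf x \<Longrightarrow> nf a \<Longrightarrow> olt x a \<Longrightarrow> olt d d' \<Longrightarrow> mult_of d' a \<Longrightarrow> olt (next_mult x d) a"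
proof (induction x arbitrary: a)
  case OZero
  then obtain e f where a: "a = OPlus e f" by (cases a) auto
  then have "ole d' e" using mult_of_lead OZero by blast
  then show ?case using a OZero olt_ole_trans by auto
next
  case (OPlus c g)
  then obtain e f where a: "a = OPlus e f" by (cases a) auto
  have "olt d e" using mult_of_lead OPlus.prems a olt_ole_trans by blast
  show ?case
  proof (cases "olt c d \<or> olt c e")
    case True
    then show ?thesis using a \<open>olt d e\<close> by auto
  next
    case False
    then have "c = e" "olt g f" using OPlus.prems a by auto
    then have "f \<noteq> OZero" by auto
    then have "mult_of d' f" using OPlus.prems a by auto
    then have "olt (next_mult g d) f" using OPlus.IH[of f] OPlus.prems a \<open>olt g f\<close> by auto
    then show ?thesis using a False \<open>c = e\<close> by simp
  qed
qed

section \<open>Worlds\<close>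

definition W :: "nat \<Rightarrow> (nat \<Rightarrow> ord) set" where
  "W N = {v. (\<forall>k. nf (v k)) \<and> (\<forall>k<N. mult_of (v (Suc k)) (v k))}"

definition world_le :: "nat \<Rightarrow> (nat \<Rightarrow> ord) \<Rightarrow> (nat \<Rightarrow> ord) \<Rightarrow> bool" where
  "world_le N v w = (\<forall>k\<le>N. ole (v k) (w k))"

lemma zero_world: "(\<lambda>_. OZero) \<in> W N"
  by (simp add: W_def)

text \<open>\<open>lift n f g\<close> agrees with \<open>g\<close> beyond \<open>n\<close> and, going down from \<open>n\<close>, takes
  the next multiple of \<open>\<omega>\<close> to the following coordinate above \<open>f\<close>; this is the
  basic way of producing a world strictly above \<open>f\<close> in the coordinates \<open>\<le> n\<close>.\<close>

function lift :: "nat \<Rightarrow> (nat \<Rightarrow> ord) \<Rightarrow> (nat \<Rightarrow> ord) \<Rightarrow> nat \<Rightarrow> ord" where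
  "lift n f g k = (if n < k then g k else next_mult (f k) (lift n f g (Suc k)))"
  by auto
termination by (relation "measure (\<lambda>(n, _, _, k). Suc n - k)") auto

declare lift.simps [simp del]

lemma lift_above: "n < k \<Longrightarrow> lift n f g k = g k"
  by (simp add: lift.simps)

lemma lift_below: "k \<le> n \<Longrightarrow> lift n f g k = next_mult (f k) (lift n f g (Suc k))"
  by (subst lift.simps) simp

lemma lift_gt: "k \<le> n \<Longrightarrow> olt (f k) (lift n f g k)"
  by (simp add: lift_below next_mult_gt)

lemma nf_lift: "\<forall>k. nf (f k) \<Longrightarrow> \<forall>k. nf (g k) \<Longrightarrow> nf (lift n f g k)"
proof (induction n f g k rule: lift.induct)
  case (1 n f g k)
  then show ?case by (cases "n < k") (auto simp: lift_above lift_below intro: nf_next_mult)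
qed

lemma lift_world:
  assumes "\<forall>k. nf (f k)" "g \<in> W N"
  shows "lift n f g \<in> W N"
proof -
  have "nf (lift n f g k)" for k
    using assms nf_lift by (simp add: W_def)
  moreover have "mult_of (lift n f g (Suc k)) (lift n f g k)" if "k < N" for k
    using assms that by (cases "n < k") (auto simp: lift_above lift_below mult_of_next_mult W_def)
  ultimately show ?thesis unfolding W_def by blast
qed

lemma world_join:
  assumes "v \<in> W N" "u \<in> W N"
  obtains w where "w \<in> W N" "world_le N v w" "world_le N u w"
proof -
  define w where "w = lift N (\<lambda>k. omax (v k) (u k)) (\<lambda>_. OZero)"
  have "olt (omax (v k) (u k)) (w k)" if "k \<le> N" for k
    unfolding w_def using that by (rule lift_gt)
  then have "olt (v k) (w k) \<and> olt (u k) (w k)" if "k \<le> N" for k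
    using that ole_olt_trans[OF omax_ge(1)] ole_olt_trans[OF omax_ge(2)] by blast
  then have "world_le N v w" "world_le N u w"
    unfolding world_le_def ole_def by blast+
  moreover have "\<forall>k. nf (omax (v k) (u k))" using assms by (auto simp: W_def intro: nf_omax)
  then have "w \<in> W N" unfolding w_def using zero_world by (rule lift_world)
  ultimately show thesis using that by blast
qed

text \<open>Going down from \<open>m\<close>, each step
  is an instance of the gap lemma, using that \<open>w k\<close> is a multiple of \<open>\<omega>^(w (Suc k))\<close>.\<close>

lemma lift_below_world:
  assumes "w \<in> W N" "n < m" "m \<le> N" "\<forall>k. nf (f k)"
    and f_w: "\<forall>k\<le>n. olt (f k) (w k)" and g_w: "\<forall>k\<le>m. olt (g k) (w k)"
  shows "k \<le> m \<Longrightarrow> olt (lift n f g k) (w k)"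
proof (induction k rule: inc_induct)
  case base
  then show ?case using \<open>n < m\<close> g_w by (simp add: lift_above)
next
  case (step k)
  show ?case
  proof (cases "n < k")
    case True
    then show ?thesis using g_w step by (simp add: lift_above)
  next
    case False
    then have "lift n f g k = next_mult (f k) (lift n f g (Suc k))" by (simp add: lift_below)
    moreover have "olt (f k) (w k)" using False f_w by simp
    moreover have "nf (w k)" "mult_of (w (Suc k)) (w k)"
      using assms(1,3) step by (auto simp: W_def)
    ultimately show ?thesis using next_mult_below assms(4) step.IH by simp
  qed
qed

section \<open>Semantics\<close>

definition dia :: "nat \<Rightarrow> nat \<Rightarrow> (nat \<Rightarrow> ord) set \<Rightarrow> (nat \<Rightarrow> ord) set" where
  "dia N n X = (if n \<le> N then {w \<in> W N. \<exists>v\<in>X. \<forall>k\<le>n. olt (v k) (w k)} else {})"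

definition Dsem :: "nat \<Rightarrow> enat \<Rightarrow> (nat \<Rightarrow> ord) set \<Rightarrow> (nat \<Rightarrow> ord) set" where
  "Dsem N a X = (case a of enat n \<Rightarrow> dia N n X | \<infinity> \<Rightarrow> X \<inter> dia N N X)"

fun sem :: "nat \<Rightarrow> fm \<Rightarrow> (nat \<Rightarrow> ord) set" where
  "sem N (Var p) = W N"
| "sem N Top = W N"
| "sem N (Conj A B) = sem N A \<inter> sem N B"
| "sem N (Dia a A) = Dsem N a (sem N A)"

definition up_closed :: "nat \<Rightarrow> (nat \<Rightarrow> ord) set \<Rightarrow> bool" where
  "up_closed N X \<longleftrightarrow> X \<subseteq> W N \<and> (\<forall>w w'. w \<in> X \<longrightarrow> w' \<in> W N \<longrightarrow> world_le N w w' \<longrightarrow> w' \<in> X)"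

lemma diaI: "n \<le> N \<Longrightarrow> w \<in> W N \<Longrightarrow> v \<in> X \<Longrightarrow> \<forall>k\<le>n. olt (v k) (w k) \<Longrightarrow> w \<in> dia N n X"
  unfolding dia_def by auto

lemma dia_mono: "X \<subseteq> Y \<Longrightarrow> dia N n X \<subseteq> dia N n Y"
  by (auto simp: dia_def)

lemma dia_antimono: "m \<le> n \<Longrightarrow> dia N n X \<subseteq> dia N m X"
  unfolding dia_def by (auto split: if_splits) (meson le_trans)

lemma dia_dia: "dia N m (dia N n X) \<subseteq> dia N (min m n) X"
proof
  fix w assume "w \<in> dia N m (dia N n X)"
  then obtain v u where "m \<le> N" "w \<in> W N" "\<forall>k\<le>m. olt (v k) (w k)"
    and "n \<le> N" "u \<in> X" "\<forall>k\<le>n. olt (u k) (v k)"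
    by (auto simp: dia_def split: if_splits)
  then show "w \<in> dia N (min m n) X"
    by (intro diaI) (auto intro: olt_trans)
qed

lemma up_closed_dia: "up_closed N (dia N n X)"
  unfolding up_closed_def dia_def world_le_def
  by (auto split: if_splits) (meson le_trans olt_ole_trans)

lemma up_closed_Int: "up_closed N X \<Longrightarrow> up_closed N Y \<Longrightarrow> up_closed N (X \<inter> Y)"
  unfolding up_closed_def by blast

lemma up_closed_Dsem: "up_closed N X \<Longrightarrow> up_closed N (Dsem N a X)"
  by (cases a) (simp_all add: Dsem_def up_closed_dia up_closed_Int)

lemma up_closed_W: "up_closed N (W N)"
  unfolding up_closed_def by blast

lemma up_closed_sem: "up_closed N (sem N A)"
proof (induction A)
  case (Conj A B)
  then show ?case unfolding sem.simps by (rule up_closed_Int)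
next
  case (Dia a A)
  then show ?case unfolding sem.simps by (rule up_closed_Dsem)
qed (simp_all add: up_closed_W)

lemma sem_W: "sem N A \<subseteq> W N"
  using up_closed_sem up_closed_def by blast

section \<open>Soundness\<close>

text \<open>The modal rules hold for every \<open>N\<close>, except that the rules comparing a finite
  index \<open>b\<close> with \<open>\<omega>\<close> require \<open>b < N\<close>.\<close>

lemma Dsem_mono:
  assumes "X \<subseteq> Y"
  shows "Dsem N a X \<subseteq> Dsem N a Y"
proof (cases a)
  case (enat n)
  then show ?thesis using dia_mono[OF assms, of N n] by (simp add: Dsem_def)
next
  case infinity
  then show ?thesis using assms dia_mono[OF assms, of N N] by (auto simp: Dsem_def)
qed

lemma Dsem_outer:
  assumes "b \<le> a"
  shows "Dsem N a (Dsem N b X) \<subseteq> Dsem N b X"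
proof (cases a; cases b)
  fix m n assume "a = enat m" "b = enat n"
  then show ?thesis using assms dia_dia[of N m n X] by (simp add: Dsem_def min_absorb2)
qed (use assms in \<open>auto simp: Dsem_def\<close>)

lemma Dsem_inner:
  assumes "b \<le> a"
  shows "Dsem N b (Dsem N a X) \<subseteq> Dsem N b X"
proof (cases a; cases b)
  fix m n assume "a = enat m" "b = enat n"
  then show ?thesis using assms dia_dia[of N n m X] by (simp add: Dsem_def min_absorb1)
next
  fix n assume "a = \<infinity>" "b = enat n"
  then show ?thesis using dia_mono[of "X \<inter> dia N N X" X N n] by (auto simp: Dsem_def)
qed (use assms in \<open>auto simp: Dsem_def\<close>)

lemma Dsem_antimono:
  assumes "b < a" "b < enat N"
  shows "Dsem N a X \<subseteq> Dsem N b X"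
proof -
  obtain n where b: "b = enat n" "n < N" using assms by (cases b) auto
  show ?thesis
  proof (cases a)
    case (enat m)
    then have "n \<le> m" using assms(1) b by simp
    then show ?thesis using dia_antimono[of n m N X] b enat by (simp add: Dsem_def)
  next
    case infinity
    then show ?thesis using dia_antimono[of n N N X] b by (auto simp: Dsem_def)
  qed
qed

lemma Dsem_omega: "Dsem N \<infinity> X \<subseteq> X"
  by (simp add: Dsem_def)

text \<open>The key semantic fact behind axiom J: given \<open>w\<close> above \<open>v \<in> X\<close> in coordinates
  \<open>\<le> m\<close> and above \<open>u \<in> Y\<close> in coordinates \<open>\<le> n < m\<close>, the lifted world
  \<open>lift n (max v u) v\<close> lies in \<open>X\<close>, above \<open>u\<close>, and (by the gap lemma and the
  alignment of \<open>w\<close>) still below \<open>w\<close> in coordinates \<open>\<le> m\<close>.\<close>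

lemma dia_J:
  assumes "n < m" "up_closed N X" "Y \<subseteq> W N"
  shows "dia N m X \<inter> dia N n Y \<subseteq> dia N m (X \<inter> dia N n Y)"
proof
  fix w assume "w \<in> dia N m X \<inter> dia N n Y"
  then obtain v u where "m \<le> N" and w: "w \<in> W N"
    and v: "v \<in> X" "\<forall>k\<le>m. olt (v k) (w k)" and u: "u \<in> Y" "\<forall>k\<le>n. olt (u k) (w k)"
    by (auto simp: dia_def split: if_splits)
  have vW: "v \<in> W N" and uW: "u \<in> W N" using v u assms by (auto simp: up_closed_def)
  define f where "f k = omax (v k) (u k)" for k
  define G where "G = lift n f v"
  have nf_f: "\<forall>k. nf (f k)" using vW uW by (auto simp: W_def f_def intro: nf_omax)
  have GW: "G \<in> W N" unfolding G_def using lift_world[OF nf_f vW] .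
  have f_G: "olt (f k) (G k)" if "k \<le> n" for k
    unfolding G_def using that by (rule lift_gt)
  have "ole (v k) (G k)" for k
  proof (cases "n < k")
    case True
    then show ?thesis by (simp add: G_def lift_above ole_def)
  next
    case False
    then have "olt (f k) (G k)" by (intro f_G) simp
    then have "olt (v k) (G k)" using omax_ge(1) ole_olt_trans unfolding f_def by blast
    then show ?thesis by (simp add: ole_def)
  qed
  then have "world_le N v G" by (simp add: world_le_def)
  then have "G \<in> X" using v(1) GW assms(2) by (auto simp: up_closed_def)
  moreover have "G \<in> dia N n Y"
  proof (rule diaI[OF _ GW u(1)])
    show "n \<le> N" using \<open>n < m\<close> \<open>m \<le> N\<close> by simp
    show "\<forall>k\<le>n. olt (u k) (G k)" using f_G omax_ge(2) ole_olt_trans unfolding f_def by blast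
  qed
  moreover have "\<forall>k\<le>m. olt (G k) (w k)"
  proof -
    have "\<forall>k\<le>n. olt (f k) (w k)"
      using \<open>n < m\<close> v(2) u(2) by (auto simp: f_def intro: omax_less)
    then show ?thesis
      unfolding G_def using lift_below_world[OF w \<open>n < m\<close> \<open>m \<le> N\<close> nf_f _ v(2)] by blast
  qed
  ultimately show "w \<in> dia N m (X \<inter> dia N n Y)" using diaI[OF \<open>m \<le> N\<close> w] by blast
qed

lemma Dsem_J:
  assumes "b < a" "b < enat N" "up_closed N X" "Y \<subseteq> W N"
  shows "Dsem N a X \<inter> Dsem N b Y \<subseteq> Dsem N a (X \<inter> Dsem N b Y)"
proof -
  obtain n where b: "b = enat n" using assms(1) by (cases b) auto
  show ?thesis
  proof (cases a)
    case (enat m)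
    then show ?thesis using dia_J[of n m N X Y] assms b by (simp add: Dsem_def)
  next
    case infinity
    then show ?thesis using dia_J[of n N N X Y] assms b by (auto simp: Dsem_def)
  qed
qed

lemma soundness: "A \<turnstile>\<^sub>R B \<Longrightarrow> \<exists>N0. \<forall>N\<ge>N0. sem N A \<subseteq> sem N B"
proof (induction rule: RCw.induct)
  case (cut A B C)
  then obtain N1 N2 where "\<forall>N\<ge>N1. sem N A \<subseteq> sem N B" "\<forall>N\<ge>N2. sem N B \<subseteq> sem N C"
    by blast
  then show ?case by (intro exI[of _ "max N1 N2"]) fastforce
next
  case (conjI A B C)
  then obtain N1 N2 where "\<forall>N\<ge>N1. sem N A \<subseteq> sem N B" "\<forall>N\<ge>N2. sem N A \<subseteq> sem N C"
    by blast
  then show ?case by (intro exI[of _ "max N1 N2"]) fastforce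
next
  case (nec A B a)
  then show ?case using Dsem_mono by (metis sem.simps(4))
next
  case (J a b A B)
  obtain n where "b = enat n" using J by (cases b) auto
  then show ?case
    using Dsem_J[OF J _ up_closed_sem sem_W] by (intro exI[of _ "Suc n"]) auto
next
  case (mono a b A)
  obtain n where "b = enat n" using mono by (cases b) auto
  then show ?case
    using Dsem_antimono[OF mono] by (intro exI[of _ "Suc n"]) auto
next
  case (trans4 a A)
  then show ?case using Dsem_outer[of a a] by simp
next
  case (mono1 a b A)
  then show ?case using Dsem_outer[of b a] by simp
next
  case (mono2 a b A)
  then show ?case using Dsem_inner[of b a] by simp
next
  case (omega A)
  then show ?case using Dsem_omega by simp
qed (use sem_W in auto)

section \<open>Satisfiability\<close>

fun max_index :: "fm \<Rightarrow> nat" where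
  "max_index (Var p) = 0"
| "max_index Top = 0"
| "max_index (Conj A B) = max (max_index A) (max_index B)"
| "max_index (Dia a A) = (case a of enat n \<Rightarrow> max n (max_index A) | \<infinity> \<Rightarrow> max_index A)"

lemma dia_witness:
  assumes "n \<le> N" "v \<in> X" "up_closed N X"
  shows "lift n v v \<in> dia N n X" "n = N \<Longrightarrow> lift n v v \<in> X"
proof -
  have vW: "v \<in> W N" using assms by (auto simp: up_closed_def)
  then have SW: "lift n v v \<in> W N" by (intro lift_world) (auto simp: W_def)
  have "\<forall>k\<le>n. olt (v k) (lift n v v k)" using lift_gt by blast
  then show "lift n v v \<in> dia N n X" using diaI[OF assms(1) SW assms(2)] by blast
  assume "n = N"
  with \<open>\<forall>k\<le>n. olt (v k) (lift n v v k)\<close> have "world_le N v (lift n v v)"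
    by (simp add: world_le_def ole_def)
  then show "lift n v v \<in> X" using assms SW by (auto simp: up_closed_def)
qed

lemma sem_nonempty: "max_index A \<le> N \<Longrightarrow> sem N A \<noteq> {}"
proof (induction A)
  case (Var p)
  then show ?case using zero_world by auto
next
  case Top
  then show ?case using zero_world by auto
next
  case (Conj A B)
  then obtain v u where v: "v \<in> sem N A" and u: "u \<in> sem N B" by auto
  then have "v \<in> W N" "u \<in> W N" using sem_W by blast+
  then obtain w where "w \<in> W N" "world_le N v w" "world_le N u w"
    by (rule world_join)
  then have "w \<in> sem N A" "w \<in> sem N B"
    using v u up_closed_sem[of N A] up_closed_sem[of N B] unfolding up_closed_def by blast+
  then show ?case by auto
next
  case (Dia a A)
  then obtain v where v: "v \<in> sem N A" by (cases a) auto
  show ?case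
  proof (cases a)
    case (enat n)
    then show ?thesis using dia_witness(1)[OF _ v up_closed_sem] Dia.prems by (auto simp: Dsem_def)
  next
    case infinity
    then show ?thesis using dia_witness[OF le_refl v up_closed_sem] by (auto simp: Dsem_def)
  qed
qed

section \<open>Irreflexivity\<close>

text \<open>\<open>\<langle>0\<rangle>\<close> is well-founded: a nonempty set of worlds is not contained in \<open>\<langle>0\<rangle>\<close> of
  itself, as a world with minimal first coordinate has nothing below it.\<close>

lemma dia_zero_wf:
  assumes "X \<subseteq> W N" "X \<noteq> {}"
  shows "\<not> X \<subseteq> dia N 0 X"
proof
  assume sub: "X \<subseteq> dia N 0 X"
  let ?T = "(\<lambda>w. w 0) ` X"
  obtain x where "x \<in> X" using assms(2) by blast
  moreover have "\<forall>y\<in>?T. nf y" using assms(1) by (auto simp: W_def)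
  ultimately obtain m where "m \<in> ?T" and min: "\<forall>y\<in>?T. \<not> olt y m"
    using nf_minimal[of "x 0" ?T] by blast
  then obtain w where "w \<in> X" "m = w 0" by blast
  with sub obtain v where "v \<in> X" "olt (v 0) (w 0)"
    by (auto simp: dia_def split: if_splits)
  then show False using min \<open>m = w 0\<close> by blast
qed

lemma derives_Dia_zero:
  assumes "A \<turnstile>\<^sub>R Dia a A"
  shows "A \<turnstile>\<^sub>R Dia (enat 0) A"
proof (cases "a = enat 0")
  case False
  then have "enat 0 < a" by (simp add: zero_enat_def[symmetric])
  then show ?thesis using RCw.cut[OF assms RCw.mono] by blast
qed (use assms in simp)

theorem lemma6p1:
  fixes A :: fm and a :: enat
  shows "\<not> (A \<turnstile>\<^sub>R Dia a A)"
proof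
  assume "A \<turnstile>\<^sub>R Dia a A"
  then have "A \<turnstile>\<^sub>R Dia (enat 0) A" by (rule derives_Dia_zero)
  then obtain N0 where N0: "\<forall>N\<ge>N0. sem N A \<subseteq> sem N (Dia (enat 0) A)"
    using soundness by blast
  define N where "N = max N0 (max_index A)"
  have "sem N A \<subseteq> sem N (Dia (enat 0) A)" using N0 by (simp add: N_def)
  then have "sem N A \<subseteq> dia N 0 (sem N A)" by (simp add: Dsem_def)
  moreover have "sem N A \<noteq> {}" by (rule sem_nonempty) (simp add: N_def)
  ultimately show False using dia_zero_wf sem_W by blast
qed

end
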